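(* Let $V$ be a finite set, $\mathcal{F}\subseteq 2^V$ a minimal hereditary family with $\delta(\mathcal{F})\ge 12$, and $x\in V$ with $f_3(x)=0$. Then $u(x)\ge 5.3$. Moreover, $u(x)=5.3$ if and only if $f_1(x)=5$, $f_2(x)=6$, and $\omega(x,F\cup\{x\})=\frac{6}{20}$ for every $F\in\mathcal{F}(x)$ with $|F|=2$.
   Context: Let $V$ be a finite set. A family $\mathcal{F}\subseteq 2^V$ is hereditary if $F'\subseteq F\in\mathcal{F}$ implies $F'\in\mathcal{F}$. For $x\in V$: the link is $\mathcal{F}(x)=\{F\setminus\{x\}: x\in F\in\mathcal{F}\}$, $d_{\mathcal{F}}(x)=|\mathcal{F}(x)|$, $\delta(\mathcal{F})=\min_{x\in V}d_{\mathcal{F}}(x)$. For $A\subseteq V$, $d_{\mathcal{F}}(A)=|\{F\in\mathcal{F}: A\subseteq F\}|$. A set $F\in\mathcal{F}$ is maximal if no other member strictly contains it; a hereditary $\mathcal{F}$ with $\delta(\mathcal{F})\ge 12$ is minimal if $\delta(\mathcal{F}\setminus\{F\})\le 11$ for every maximal $F\in\mathcal{F}$. $f_i(x)$ denotes the number of $i$-element sets in $\mathcal{F}(x)$. Weights: for $x\in F\in\mathcal{F}$ define $\omega(x,F)$ as follows. If $|F|\ne 3$, $\omega(x,F)=1/|F|$. If $|F|=3$: if $F$ is contained in some 4-element member of $\mathcal{F}$, every element of $F$ gets $\omega=1/3$; otherwise order the three 2-subsets of $F$ as $e_1,e_2,e_3$ with $d_{\mathcal{F}}(e_1)\le d_{\mathcal{F}}(e_2)\le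 d_{\mathcal{F}}(e_3)$; if $d_{\mathcal{F}}(e_2)\le 4<d_{\mathcal{F}}(e_3)$, the two elements of $e_3$ get $\omega=7/20$ and the element of $F\setminus e_3$ gets $6/20$; else if $d_{\mathcal{F}}(e_1)\le 4<d_{\mathcal{F}}(e_2)$, the two elements of $e_1$ get $7/20$ and the element of $F\setminus e_1$ gets $6/20$; otherwise every element of $F$ gets $1/3$. The weight of $x$ is $u(x)=\sum_{x\in F\in\mathcal{F}}\omega(x,F)$. *)

theory Defs
  imports Complex_Main
begin

definition hereditary :: "'a set set \<Rightarrow> bool" where
  "hereditary \<F> \<longleftrightarrow> (\<forall>F\<in>\<F>. \<forall>F'. F' \<subseteq> F \<longrightarrow> F' \<in> \<F>)"

definition link :: "'a set set \<Rightarrow> 'a \<Rightarrow> 'a set set" where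
  "link \<F> x = {F - {x} | F. F \<in> \<F> \<and> x \<in> F}"

definition deg :: "'a set set \<Rightarrow> 'a \<Rightarrow> nat" where
  "deg \<F> x = card (link \<F> x)"

definition min_deg :: "'a set \<Rightarrow> 'a set set \<Rightarrow> nat" where
  "min_deg V \<F> = Min ((\<lambda>x. deg \<F> x) ` V)"

definition set_deg :: "'a set set \<Rightarrow> 'a set \<Rightarrow> nat" where
  "set_deg \<F> A = card {F \<in> \<F>. A \<subseteq> F}"

definition maximal_in :: "'a set set \<Rightarrow> 'a set \<Rightarrow> bool" where
  "maximal_in \<F> F \<longleftrightarrow> F \<in> \<F> \<and> (\<forall>G\<in>\<F>. F \<subseteq> G \<longrightarrow> G = F)"

definition minimal_family :: "'a set \<Rightarrow> 'a set set \<Rightarrow> bool" where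
  "minimal_family V \<F> \<longleftrightarrow> hereditary \<F> \<and> min_deg V \<F> \<ge> 12 \<and>
     (\<forall>F. maximal_in \<F> F \<longrightarrow> min_deg V (\<F> - {F}) \<le> 11)"

definition f_count :: "'a set set \<Rightarrow> nat \<Rightarrow> 'a \<Rightarrow> nat" where
  "f_count \<F> i x = card {A \<in> link \<F> x. card A = i}"

text \<open>With the 2-subsets
  ordered e1,e2,e3 by nondecreasing d_F, the condition d(e2) <= 4 < d(e3) holds iff
  exactly one pair is high (and then it is e3); the condition d(e1) <= 4 < d(e2)
  holds iff exactly two pairs are high (and then e1 is the unique non-high pair).\<close>
definition high_pairs :: "'a set set \<Rightarrow> 'a set \<Rightarrow> 'a set set" where
  "high_pairs \<F> F = {e. e \<subseteq> F \<and> card e = 2 \<and> set_deg \<F> e > 4}"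

definition low_pairs :: "'a set set \<Rightarrow> 'a set \<Rightarrow> 'a set set" where
  "low_pairs \<F> F = {e. e \<subseteq> F \<and> card e = 2 \<and> set_deg \<F> e \<le> 4}"

definition omega :: "'a set set \<Rightarrow> 'a \<Rightarrow> 'a set \<Rightarrow> real" where
  "omega \<F> x F =
    (if card F \<noteq> 3 then 1 / real (card F)
     else if (\<exists>G\<in>\<F>. card G = 4 \<and> F \<subseteq> G) then 1/3
     else if card (high_pairs \<F> F) = 1 then
       (if x \<in> (THE e. e \<in> high_pairs \<F> F) then 7/20 else 6/20)
     else if card (high_pairs \<F> F) = 2 then
       (if x \<in> (THE e. e \<in> low_pairs \<F> F) then 7/20 else 6/20)
     else 1/3)"

definition weight :: "'a set set \<Rightarrow> 'a \<Rightarrow> real" where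
  "weight \<F> x = (\<Sum>F\<in>{F\<in>\<F>. x \<in> F}. omega \<F> x F)"

end

theory Submission
  imports Defs
begin

text \<open>Since \<open>\<F>\<close> is hereditary, so is the link of \<open>x\<close>, and a hereditary family without
  3-sets consists of the empty set, \<open>f\<^sub>1\<close> singletons and \<open>f\<^sub>2 \<le> f\<^sub>1 choose 2\<close> pairs; the
  degree bound gives \<open>1 + f\<^sub>1 + f\<^sub>2 \<ge> 12\<close>, which forces \<open>f\<^sub>1 \<ge> 5\<close>. The members of \<open>\<F>\<close>
  through \<open>x\<close> contribute \<open>1\<close>, \<open>1/2\<close> for each singleton and at least \<open>6/20\<close> for each pair, so
  \<open>u(x) \<ge> 1 + f\<^sub>1/2 + 3 f\<^sub>2/10 = 1 + 3 (f\<^sub>1 + f\<^sub>2)/10 + f\<^sub>1/5 \<ge> 1 + 33/10 + 1\<close>, with equality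
  exactly when all three estimates are tight.\<close>

lemma mem_link_iff: "A \<in> link \<F> x \<longleftrightarrow> x \<notin> A \<and> insert x A \<in> \<F>"
proof
  assume "A \<in> link \<F> x"
  then obtain F where "F \<in> \<F>" "x \<in> F" "A = F - {x}" unfolding link_def by auto
  then show "x \<notin> A \<and> insert x A \<in> \<F>" by (simp add: insert_absorb)
next
  assume A: "x \<notin> A \<and> insert x A \<in> \<F>"
  then have "A = insert x A - {x}" by simp
  with A show "A \<in> link \<F> x" unfolding link_def by blast
qed

lemma card_insert_link: "A \<in> link \<F> x \<Longrightarrow> finite A \<Longrightarrow> card (insert x A) = card A + 1"
  by (simp add: mem_link_iff)

lemma link_subset_Pow: "\<F> \<subseteq> Pow V \<Longrightarrow> link \<F> x \<subseteq> Pow V"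
  by (auto simp: mem_link_iff)

lemma hereditary_link:
  assumes "hereditary \<F>"
  shows "hereditary (link \<F> x)"
  unfolding hereditary_def
proof (intro ballI allI impI)
  fix A B assume "A \<in> link \<F> x" "B \<subseteq> A"
  then have "x \<notin> B" "insert x B \<subseteq> insert x A" "insert x A \<in> \<F>"
    by (auto simp: mem_link_iff)
  with assms show "B \<in> link \<F> x"
    unfolding hereditary_def mem_link_iff by blast
qed

lemma min_deg_le_deg: "finite V \<Longrightarrow> x \<in> V \<Longrightarrow> min_deg V \<F> \<le> deg \<F> x"
  unfolding min_deg_def by (rule Min_le) auto

lemma weight_eq_sum_link: "weight \<F> x = (\<Sum>A\<in>link \<F> x. omega \<F> x (insert x A))"
proof -
  have "{F \<in> \<F>. x \<in> F} = insert x ` link \<F> x"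
  proof (intro equalityI subsetI)
    fix F assume "F \<in> {F \<in> \<F>. x \<in> F}"
    then have "F - {x} \<in> link \<F> x" "F = insert x (F - {x})"
      by (auto simp: mem_link_iff insert_absorb)
    then show "F \<in> insert x ` link \<F> x" by blast
  qed (auto simp: mem_link_iff)
  moreover have "inj_on (insert x) (link \<F> x)"
  proof (rule inj_onI)
    fix A B assume "A \<in> link \<F> x" "B \<in> link \<F> x" "insert x A = insert x B"
    then show "A = B" by (metis Diff_insert_absorb mem_link_iff)
  qed
  ultimately show ?thesis
    unfolding weight_def by (simp add: sum.reindex)
qed

lemma omega_card_neq_3: "card F \<noteq> 3 \<Longrightarrow> omega \<F> x F = 1 / real (card F)"
  unfolding omega_def by simp

lemma omega_card_3_ge: "card F = 3 \<Longrightarrow> 6/20 \<le> omega \<F> x F"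
  unfolding omega_def by (auto split: if_splits)

lemma hereditary_card_le_2:
  assumes "hereditary G" and "{A \<in> G. card A = 3} = {}" and "A \<in> G"
  shows "card A \<le> 2"
proof (rule ccontr)
  assume "\<not> card A \<le> 2"
  then obtain B where "B \<subseteq> A" "card B = 3"
    using obtain_subset_with_card_n[of 3 A] by force
  with assms show False unfolding hereditary_def by blast
qed

lemma card_eq_0_members:
  assumes "{} \<in> G" and "\<forall>A\<in>G. finite A"
  shows "{A \<in> G. card A = 0} = {{}}"
  using assms by auto

lemma hereditary_card_pairs_le_choose:
  assumes "hereditary G" and "finite G"
  shows "card {A \<in> G. card A = 2} \<le> card {A \<in> G. card A = 1} choose 2"
proof -
  define U where "U = {a. {a} \<in> G}"
  have singletons: "{A \<in> G. card A = 1} = (\<lambda>a. {a}) ` U"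
    unfolding U_def by (auto simp: card_Suc_eq)
  have inj: "inj_on (\<lambda>a. {a}) U" by (auto simp: inj_on_def)
  have "(\<lambda>a. {a}) ` U \<subseteq> G" by (auto simp: U_def)
  then have "finite U"
    using finite_subset[OF _ assms(2)] finite_imageD[OF _ inj] by blast
  have "A \<subseteq> U" if "A \<in> G" for A
  proof
    fix a assume "a \<in> A"
    with that assms(1) show "a \<in> U" unfolding U_def hereditary_def by blast
  qed
  then have pairs: "{A \<in> G. card A = 2} \<subseteq> {B. B \<subseteq> U \<and> card B = 2}" by blast
  have "card {A \<in> G. card A = 2} \<le> card U choose 2"
    using card_mono[OF _ pairs] n_subsets[OF \<open>finite U\<close>] \<open>finite U\<close> by simp
  then show ?thesis
    unfolding singletons card_image[OF inj] .
qed

lemma sum_by_card_le_2: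
  assumes "finite G" and "\<forall>A\<in>G. card A \<le> 2"
  shows "sum g G = sum g {A \<in> G. card A = 0} + sum g {A \<in> G. card A = 1}
    + sum g {A \<in> G. card A = 2}"
proof -
  have "card ` G \<subseteq> {..2}" using assms(2) by auto
  from sum.group[OF assms(1) _ this, of g, symmetric]
  show ?thesis by (simp add: numeral_2_eq_2 add.commute add.left_commute)
qed

lemma sum_eq_const_iff:
  fixes g :: "'a \<Rightarrow> real"
  assumes "finite A" and "\<forall>a\<in>A. c \<le> g a"
  shows "sum g A = c * card A \<longleftrightarrow> (\<forall>a\<in>A. g a = c)"
proof -
  have "sum g A = c * card A \<longleftrightarrow> (\<Sum>a\<in>A. g a - c) = 0"
    by (simp add: sum_subtractf mult.commute)
  also have "\<dots> \<longleftrightarrow> (\<forall>a\<in>A. g a = c)"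
    using sum_nonneg_eq_0_iff[OF assms(1), of "\<lambda>a. g a - c"] assms(2) by auto
  finally show ?thesis .
qed

lemma weight_bound_arith:
  fixes f\<^sub>1 f\<^sub>2 :: nat and S :: real
  assumes "11 \<le> f\<^sub>1 + f\<^sub>2" and "f\<^sub>2 \<le> f\<^sub>1 choose 2" and "3/10 * f\<^sub>2 \<le> S"
  shows "53/10 \<le> 1 + f\<^sub>1/2 + S \<and>
    (1 + f\<^sub>1/2 + S = 53/10 \<longleftrightarrow> f\<^sub>1 = 5 \<and> f\<^sub>2 = 6 \<and> S = 3/10 * f\<^sub>2)"
proof -
  have "5 \<le> f\<^sub>1"
  proof (rule ccontr)
    assume "\<not> 5 \<le> f\<^sub>1"
    then have "f\<^sub>1 choose 2 \<le> 4 choose 2" by (simp add: binomial_right_mono)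
    with assms(1,2) \<open>\<not> 5 \<le> f\<^sub>1\<close> show False by (simp add: choose_two)
  qed
  have excess: "1 + f\<^sub>1/2 + S - 53/10
      = (real f\<^sub>1 - 5)/5 + 3/10 * (real f\<^sub>1 + real f\<^sub>2 - 11) + (S - 3/10 * f\<^sub>2)"
    by (simp add: field_simps)
  have "5 \<le> real f\<^sub>1" "11 \<le> real f\<^sub>1 + real f\<^sub>2"
    using \<open>5 \<le> f\<^sub>1\<close> assms(1) by linarith+
  then have "1 + f\<^sub>1/2 + S = 53/10 \<longleftrightarrow>
      real f\<^sub>1 = 5 \<and> real f\<^sub>1 + real f\<^sub>2 = 11 \<and> S = 3/10 * f\<^sub>2"
    using excess assms(3) by (intro iffI conjI) linarith+
  with excess \<open>5 \<le> real f\<^sub>1\<close> \<open>11 \<le> real f\<^sub>1 + real f\<^sub>2\<close> assms(3) show ?thesis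
    by auto
qed

lemma deg_eq_f_count:
  assumes "finite (link \<F> x)" and "{} \<in> link \<F> x"
    and "\<forall>A\<in>link \<F> x. finite A" and "\<forall>A\<in>link \<F> x. card A \<le> 2"
  shows "deg \<F> x = 1 + f_count \<F> 1 x + f_count \<F> 2 x"
  using sum_by_card_le_2[OF assms(1,4), of "\<lambda>_. 1::nat"] card_eq_0_members[OF assms(2,3)]
  by (simp add: deg_def f_count_def)

lemma weight_eq_f_count:
  assumes "finite (link \<F> x)" and "{} \<in> link \<F> x"
    and "\<forall>A\<in>link \<F> x. finite A" and "\<forall>A\<in>link \<F> x. card A \<le> 2"
  shows "weight \<F> x = 1 + f_count \<F> 1 x / 2
    + (\<Sum>A\<in>{A \<in> link \<F> x. card A = 2}. omega \<F> x (insert x A))"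
proof -
  let ?singletons = "{A \<in> link \<F> x. card A = 1}"
  have "omega \<F> x (insert x A) = 1/2" if "A \<in> ?singletons" for A
  proof -
    have "card (insert x A) = 2"
      using that assms(3) card_insert_link[of A \<F> x] by simp
    then show ?thesis by (simp add: omega_card_neq_3)
  qed
  then have "(\<Sum>A\<in>?singletons. omega \<F> x (insert x A)) = (\<Sum>A\<in>?singletons. 1/2)"
    by (rule sum.cong[OF refl])
  then have singletons: "(\<Sum>A\<in>?singletons. omega \<F> x (insert x A)) = f_count \<F> 1 x / 2"
    by (simp add: f_count_def)
  have "weight \<F> x = omega \<F> x {x} + (\<Sum>A\<in>?singletons. omega \<F> x (insert x A))
      + (\<Sum>A\<in>{A \<in> link \<F> x. card A = 2}. omega \<F> x (insert x A))"
    using sum_by_card_le_2[OF assms(1,4)] card_eq_0_members[OF assms(2,3)]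
    by (simp add: weight_eq_sum_link)
  then show ?thesis
    unfolding singletons by (simp add: omega_card_neq_3)
qed

lemma pair_weights_bound:
  assumes "finite (link \<F> x)" and "\<forall>A\<in>link \<F> x. finite A"
  defines "S \<equiv> \<Sum>A\<in>{A \<in> link \<F> x. card A = 2}. omega \<F> x (insert x A)"
  shows "3/10 * f_count \<F> 2 x \<le> S"
    and "S = 3/10 * f_count \<F> 2 x \<longleftrightarrow>
      (\<forall>F\<in>link \<F> x. card F = 2 \<longrightarrow> omega \<F> x (F \<union> {x}) = 6/20)"
proof -
  let ?pairs = "{A \<in> link \<F> x. card A = 2}"
  have pair_ge: "\<forall>A\<in>?pairs. 6/20 \<le> omega \<F> x (insert x A)"
  proof
    fix A assume "A \<in> ?pairs"
    then have "card (insert x A) = 3"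
      using assms(2) card_insert_link[of A \<F> x] by simp
    then show "6/20 \<le> omega \<F> x (insert x A)" by (rule omega_card_3_ge)
  qed
  then have "(\<Sum>A\<in>?pairs. 6/20) \<le> S"
    unfolding S_def by (intro sum_mono) simp
  then show "3/10 * f_count \<F> 2 x \<le> S"
    by (simp add: f_count_def)
  have "finite ?pairs" using assms(1) by simp
  from sum_eq_const_iff[OF this pair_ge]
  have "S = 6/20 * card ?pairs \<longleftrightarrow> (\<forall>A\<in>?pairs. omega \<F> x (insert x A) = 6/20)"
    unfolding S_def .
  then show "S = 3/10 * f_count \<F> 2 x \<longleftrightarrow>
      (\<forall>F\<in>link \<F> x. card F = 2 \<longrightarrow> omega \<F> x (F \<union> {x}) = 6/20)"
    by (auto simp: f_count_def)
qed

theorem mainTheorem9: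
  fixes V :: "'a set" and \<F> :: "'a set set" and x :: 'a
  assumes "finite V"
    and "\<F> \<subseteq> Pow V"
    and "minimal_family V \<F>"
    and "x \<in> V"
    and "f_count \<F> 3 x = 0"
  shows "weight \<F> x \<ge> 53/10 \<and>
    (weight \<F> x = 53/10 \<longleftrightarrow>
       f_count \<F> 1 x = 5 \<and> f_count \<F> 2 x = 6 \<and>
       (\<forall>F\<in>link \<F> x. card F = 2 \<longrightarrow> omega \<F> x (F \<union> {x}) = 6/20))"
proof -
  have "hereditary \<F>" and "12 \<le> min_deg V \<F>"
    using assms(3) by (simp_all add: minimal_family_def)
  then have her: "hereditary (link \<F> x)" and "12 \<le> deg \<F> x"
    using min_deg_le_deg[OF assms(1,4), of \<F>] by (simp_all add: hereditary_link)
  have "finite (link \<F> x)" and fin_members: "\<forall>A\<in>link \<F> x. finite A"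
    using link_subset_Pow[OF assms(2)] assms(1) finite_subset by (blast, blast)
  have "link \<F> x \<noteq> {}" using \<open>12 \<le> deg \<F> x\<close> by (auto simp: deg_def)
  with her have "{} \<in> link \<F> x" unfolding hereditary_def by blast
  have "{A \<in> link \<F> x. card A = 3} = {}"
    using assms(5) \<open>finite (link \<F> x)\<close> by (simp add: f_count_def)
  then have "\<forall>A\<in>link \<F> x. card A \<le> 2" using hereditary_card_le_2[OF her] by blast
  note link_facts = \<open>finite (link \<F> x)\<close> \<open>{} \<in> link \<F> x\<close> fin_members this
  have "11 \<le> f_count \<F> 1 x + f_count \<F> 2 x"
    using deg_eq_f_count[OF link_facts] \<open>12 \<le> deg \<F> x\<close> by linarith
  moreover have "f_count \<F> 2 x \<le> f_count \<F> 1 x choose 2"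
    using hereditary_card_pairs_le_choose[OF her link_facts(1)] by (simp add: f_count_def)
  ultimately show ?thesis
    using weight_bound_arith[OF _ _ pair_weights_bound(1)[OF link_facts(1,3)]]
    unfolding weight_eq_f_count[OF link_facts] pair_weights_bound(2)[OF link_facts(1,3), symmetric]
    by blast
qed

end
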